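(* Let $e\ge2$, $\kappa\in\mathbb Z^\ell$ with $\kappa_l-\kappa_{l+1}\ge n$, $\mathbb K$ a field and $0\ne t\in\mathbb K$ with $(\mathbb K,t)$ separating $\mathrm{Std}(\mathcal P_n)$. If $\mathbf i\in I^n$ and $1\le r<n$ satisfy $i_r=i_{r+1}$, then $T_rf_{\mathbf i}=f_{\mathbf i}T_r$ in $\mathscr H_n(\mathbb K)$.
   Context: Quantum integers $[d]=[d]_t$. $\mathscr H_n(\mathbb K)=\mathscr H_n(\mathbb K,t,\kappa)$: generators $L_1..L_n,T_1..T_{n-1}$, relations $\prod_l(L_1-[\kappa_l])=0$, $(T_r+1)(T_r-t)=0$, $L_rL_s=L_sL_r$, $T_rT_s=T_sT_r$ ($|r-s|>1$), $T_sT_{s+1}T_s=T_{s+1}T_sT_{s+1}$, $T_rL_s=L_sT_r$ ($s\ne r,r+1$), $L_{r+1}(T_r-t+1)=T_rL_r+1$. Separation: $[n]^!\prod_{l<m}\prod_{-n<d<n}[\kappa_l-\kappa_m+d]\ne0$. $I=\mathbb Z/e\mathbb Z$; content of $(l,r,c)$ is $\kappa_l-r+c$, residue $\kappa_l+c-r\bmod e$; $c_k(\mathfrak t)$ the content of $k$; $\mathrm{Std}(\mathbf i)$ the standard $\ell$-multitableaux of size $n$ with residue sequence $\mathbf i$. With $\mathrm{Cont}$ the set of all contents of standard tableaux, $F_{\mathfrak t}=\prod_k\prod_{c\in\mathrm{Cont},[c_k(\mathfrak t)]\ne[c]}\frac{L_k-[c]}{[c_k(\mathfrak t)]-[c]}$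 and $f_{\mathbf i}=\sum_{\mathfrak t\in\mathrm{Std}(\mathbf i)}F_{\mathfrak t}$. *)

theory Defs
  imports Main
begin

definition qint :: "'k::field \<Rightarrow> int \<Rightarrow> 'k" where
  "qint t d = (if t = 1 then of_int d else (t powi d - 1) / (t - 1))"

text \<open>Nodes are triples (l, r, c): component l, row r, column c (all 1-based).\<close>
definition content :: "(nat \<Rightarrow> int) \<Rightarrow> nat \<times> nat \<times> nat \<Rightarrow> int" where
  "content \<kappa> x = (case x of (l, r, c) \<Rightarrow> \<kappa> l - int r + int c)"

definition residue :: "nat \<Rightarrow> (nat \<Rightarrow> int) \<Rightarrow> nat \<times> nat \<times> nat \<Rightarrow> int" where
  "residue e \<kappa> x = content \<kappa> x mod int e"

definition mp_diagram :: "nat \<Rightarrow> (nat \<times> nat \<times> nat) set \<Rightarrow> bool" where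
  "mp_diagram ell D \<longleftrightarrow> finite D \<and>
     (\<forall>(l, r, c) \<in> D. 1 \<le> l \<and> l \<le> ell \<and> 1 \<le> r \<and> 1 \<le> c \<and>
        (\<forall>r' c'. 1 \<le> r' \<and> r' \<le> r \<and> 1 \<le> c' \<and> c' \<le> c \<longrightarrow> (l, r', c') \<in> D))"

text \<open>Standard ell-multitableaux of size n: the list xs places entry k at node xs!(k-1);
  entries increase along rows and down columns in each component.\<close>
definition std_tab :: "nat \<Rightarrow> nat \<Rightarrow> (nat \<times> nat \<times> nat) list set" where
  "std_tab ell n = {xs. length xs = n \<and> distinct xs \<and> mp_diagram ell (set xs) \<and>
     (\<forall>i<n. \<forall>j<n. fst (xs!i) = fst (xs!j) \<and> fst (snd (xs!i)) \<le> fst (snd (xs!j))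
         \<and> snd (snd (xs!i)) \<le> snd (snd (xs!j)) \<longrightarrow> i \<le> j)}"

definition std_res :: "nat \<Rightarrow> nat \<Rightarrow> (nat \<Rightarrow> int) \<Rightarrow> nat \<Rightarrow> int list \<Rightarrow> (nat \<times> nat \<times> nat) list set" where
  "std_res ell n \<kappa> e i = {xs \<in> std_tab ell n. map (residue e \<kappa>) xs = i}"

definition conts :: "nat \<Rightarrow> nat \<Rightarrow> (nat \<Rightarrow> int) \<Rightarrow> int set" where
  "conts ell n \<kappa> = {content \<kappa> (xs!k) | xs k. xs \<in> std_tab ell n \<and> k < n}"

definition separating :: "'k::field \<Rightarrow> (nat \<Rightarrow> int) \<Rightarrow> nat \<Rightarrow> nat \<Rightarrow> bool" where
  "separating t \<kappa> ell n \<longleftrightarrow>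
     (\<Prod>k\<in>{1..n}. qint t (int k)) *
     (\<Prod>l\<in>{1..ell}. \<Prod>m\<in>{l<..ell}. \<Prod>d\<in>{-(int n)<..<int n}. qint t (\<kappa> l - \<kappa> m + d)) \<noteq> 0"

text \<open>A K-algebra structure on a ring: a unital ring homomorphism with central image.\<close>
definition central_hom :: "('k::field \<Rightarrow> 'a::ring_1) \<Rightarrow> bool" where
  "central_hom \<phi> \<longleftrightarrow> \<phi> 1 = 1 \<and> (\<forall>x y. \<phi> (x + y) = \<phi> x + \<phi> y) \<and>
     (\<forall>x y. \<phi> (x * y) = \<phi> x * \<phi> y) \<and> (\<forall>x a. \<phi> x * a = a * \<phi> x)"

definition hecke_rel :: "('k::field \<Rightarrow> 'a::ring_1) \<Rightarrow> 'k \<Rightarrow> (nat \<Rightarrow> int) \<Rightarrow> nat \<Rightarrow> nat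
    \<Rightarrow> (nat \<Rightarrow> 'a) \<Rightarrow> (nat \<Rightarrow> 'a) \<Rightarrow> bool" where
  "hecke_rel \<phi> t \<kappa> ell n L T \<longleftrightarrow>
     prod_list (map (\<lambda>l. L 1 - \<phi> (qint t (\<kappa> l))) [1..<ell+1]) = 0 \<and>
     (\<forall>r\<in>{1..<n}. (T r + 1) * (T r - \<phi> t) = 0) \<and>
     (\<forall>r\<in>{1..n}. \<forall>s\<in>{1..n}. L r * L s = L s * L r) \<and>
     (\<forall>r\<in>{1..<n}. \<forall>s\<in>{1..<n}. (r + 1 < s \<or> s + 1 < r) \<longrightarrow> T r * T s = T s * T r) \<and>
     (\<forall>s. 1 \<le> s \<and> s + 1 < n \<longrightarrow> T s * T (s+1) * T s = T (s+1) * T s * T (s+1)) \<and>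
     (\<forall>r\<in>{1..<n}. \<forall>s\<in>{1..n}. s \<noteq> r \<and> s \<noteq> r + 1 \<longrightarrow> T r * L s = L s * T r) \<and>
     (\<forall>r\<in>{1..<n}. L (r+1) * (T r - \<phi> t + 1) = T r * L r + 1)"

definition F_tab :: "('k::field \<Rightarrow> 'a::ring_1) \<Rightarrow> 'k \<Rightarrow> (nat \<Rightarrow> int) \<Rightarrow> nat \<Rightarrow> nat
    \<Rightarrow> (nat \<Rightarrow> 'a) \<Rightarrow> (nat \<times> nat \<times> nat) list \<Rightarrow> 'a" where
  "F_tab \<phi> t \<kappa> ell n L xs =
     prod_list (map (\<lambda>k. prod_list (map (\<lambda>c.
        (L k - \<phi> (qint t c)) * \<phi> (inverse (qint t (content \<kappa> (xs!(k-1))) - qint t c)))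
        (sorted_list_of_set {c \<in> conts ell n \<kappa>. qint t (content \<kappa> (xs!(k-1))) \<noteq> qint t c})))
      [1..<n+1])"

definition f_idem :: "('k::field \<Rightarrow> 'a::ring_1) \<Rightarrow> 'k \<Rightarrow> (nat \<Rightarrow> int) \<Rightarrow> nat \<Rightarrow> nat \<Rightarrow> nat
    \<Rightarrow> (nat \<Rightarrow> 'a) \<Rightarrow> int list \<Rightarrow> 'a" where
  "f_idem \<phi> t \<kappa> e ell n L i = (\<Sum>xs\<in>std_res ell n \<kappa> e i. F_tab \<phi> t \<kappa> ell n L xs)"

end

theory Submission
  imports Defs "HOL-Library.Disjoint_Sets"
begin

text \<open>
  Swapping the entries \<open>r\<close> and \<open>r+1\<close> of a standard tableau \<open>\<tau>\<close> with \<open>i\<^sub>r = i\<^sub>r\<^sub>+\<^sub>1\<close> gives again a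
  standard tableau \<open>s\<^sub>r\<tau>\<close> in \<open>Std(i)\<close>: equal residues rule out that \<open>r\<close> and \<open>r+1\<close> sit in adjacent
  nodes, which is the only way they could lie in the same row or column. This is a fixed point
  free involution of \<open>Std(i)\<close>, so \<open>f\<^sub>i\<close> is a sum of terms \<open>F\<^sub>\<tau> + F\<^sub>s\<^sub>r\<^sub>\<tau>\<close>. Such a term is
  \<open>A\<cdot>(P\<^sub>a(L\<^sub>r)P\<^sub>b(L\<^sub>r\<^sub>+\<^sub>1) + P\<^sub>b(L\<^sub>r)P\<^sub>a(L\<^sub>r\<^sub>+\<^sub>1))\<cdot>B\<close> where \<open>A\<close>, \<open>B\<close> are polynomials in the \<open>L\<^sub>k\<close> with
  \<open>k \<noteq> r, r+1\<close> and \<open>P\<^sub>a\<close>, \<open>P\<^sub>b\<close> are polynomials with central coefficients. The middle factor is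
  symmetric in \<open>L\<^sub>r\<close>, \<open>L\<^sub>r\<^sub>+\<^sub>1\<close>, hence a polynomial in \<open>L\<^sub>r + L\<^sub>r\<^sub>+\<^sub>1\<close> and \<open>L\<^sub>rL\<^sub>r\<^sub>+\<^sub>1\<close>, and the Hecke
  relations show that \<open>T\<^sub>r\<close> commutes with these two elements.
\<close>

definition centralizer :: "'a::ring_1 \<Rightarrow> 'a set" where
  "centralizer T = {z. T * z = z * T}"

lemma in_centralizer_iff: "z \<in> centralizer T \<longleftrightarrow> T * z = z * T"
  by (simp add: centralizer_def)

lemma zero_in_centralizer [simp]: "0 \<in> centralizer T"
  and one_in_centralizer [simp]: "1 \<in> centralizer T"
  by (simp_all add: in_centralizer_iff)

lemma centralizer_add: "a \<in> centralizer T \<Longrightarrow> b \<in> centralizer T \<Longrightarrow> a + b \<in> centralizer T"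
  and centralizer_diff: "a \<in> centralizer T \<Longrightarrow> b \<in> centralizer T \<Longrightarrow> a - b \<in> centralizer T"
  by (simp_all add: in_centralizer_iff algebra_simps)

lemma centralizer_mult: "a \<in> centralizer T \<Longrightarrow> b \<in> centralizer T \<Longrightarrow> a * b \<in> centralizer T"
  by (simp add: in_centralizer_iff) (metis mult.assoc)

lemma centralizer_power: "a \<in> centralizer T \<Longrightarrow> a ^ k \<in> centralizer T"
  by (induction k) (simp_all add: centralizer_mult)

lemma centralizer_prod_list: "set zs \<subseteq> centralizer T \<Longrightarrow> prod_list zs \<in> centralizer T"
  by (induction zs) (simp_all add: centralizer_mult)

lemma central_hom_add: "central_hom \<phi> \<Longrightarrow> \<phi> (a + b) = \<phi> a + \<phi> b"
  and central_hom_mult: "central_hom \<phi> \<Longrightarrow> \<phi> (a * b) = \<phi> a * \<phi> b"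
  and central_hom_central: "central_hom \<phi> \<Longrightarrow> \<phi> a * z = z * \<phi> a"
  and central_hom_one: "central_hom \<phi> \<Longrightarrow> \<phi> 1 = 1"
  unfolding central_hom_def by blast+

lemma central_hom_uminus:
  assumes "central_hom \<phi>"
  shows "\<phi> (- a) = - \<phi> a"
proof -
  have "\<phi> 0 = 0" using central_hom_add[OF assms, of 0 0] by simp
  then have "\<phi> (- a) + \<phi> a = 0" using central_hom_add[OF assms, of "- a" a] by simp
  then show ?thesis by (simp add: eq_neg_iff_add_eq_0)
qed

lemma central_hom_in_centralizer: "central_hom \<phi> \<Longrightarrow> \<phi> a \<in> centralizer T"
  by (simp add: in_centralizer_iff central_hom_central)

lemma central_hom_scaled_mult:
  assumes "central_hom \<phi>"
  shows "\<phi> c * a * (\<phi> d * b) = \<phi> (c * d) * (a * b)"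
proof -
  have "a * (\<phi> d * b) = \<phi> d * (a * b)"
    by (simp only: mult.assoc[symmetric] central_hom_central[OF assms, of d a, symmetric])
  then show ?thesis by (simp add: mult.assoc central_hom_mult[OF assms])
qed


subsection \<open>The quadratic and the mixed Hecke relation\<close>

lemma hecke_mixed_relation_flip:
  fixes T x y q :: "'a::ring_1"
  assumes q_central: "\<And>z. q * z = z * q" and q_unit: "q * q' = 1"
    and quad: "T * T = (q - 1) * T + q" and mixed: "y * (T - q + 1) = T * x + 1"
  shows "T * y = x * T + (q - 1) * y + 1"
proof -
  define c where "c = q - 1"
  \<comment> \<open>\<open>(T - c) T = q\<close>, so multiplying the mixed relation by \<open>T\<close> on the right isolates \<open>y q\<close>.\<close>
  have yq: "y * q = T * x * T + T"
  proof -
    have "(T - c) * T = q" using quad by (simp add: c_def algebra_simps)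
    hence "y * q = y * (T - c) * T" by (simp add: mult.assoc)
    also have "y * (T - c) = T * x + 1" using mixed by (simp add: c_def algebra_simps)
    finally show ?thesis by (simp add: algebra_simps)
  qed
  have "T * y * q = (T * T) * x * T + T * T"
    by (simp add: mult.assoc yq algebra_simps)
  also have "\<dots> = c * (y * q) + q * (x * T + 1)"
    unfolding quad yq c_def by (simp add: algebra_simps)
  also have "\<dots> = (c * y + x * T + 1) * q"
    by (simp add: algebra_simps mult.assoc q_central)
  finally have "T * y * q * q' = (c * y + x * T + 1) * q * q'" by simp
  thus ?thesis by (simp add: mult.assoc q_unit c_def algebra_simps)
qed

locale symmetric_pair =
  fixes T x y :: "'a::ring_1"
  assumes sum_in_centralizer: "x + y \<in> centralizer T"
    and prod_in_centralizer: "x * y \<in> centralizer T"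
    and commute: "x * y = y * x"

lemma hecke_symmetric_pair:
  fixes T x y q :: "'a::ring_1"
  assumes q_central: "\<And>z. q * z = z * q" and q_unit: "q * q' = 1"
    and quad: "T * T = (q - 1) * T + q" and mixed: "y * (T - q + 1) = T * x + 1"
    and commute: "x * y = y * x"
  shows "symmetric_pair T x y"
proof
  have flip: "T * y = x * T + (q - 1) * y + 1"
    using hecke_mixed_relation_flip[OF q_central q_unit quad mixed] .
  have Tx: "T * x = y * T - (q - 1) * y - 1"
    using mixed q_central[of y] by (simp add: algebra_simps)
  show "x + y \<in> centralizer T"
    unfolding in_centralizer_iff distrib_left Tx flip by (simp add: algebra_simps)
  have c_central: "(q - 1) * z = z * (q - 1)" for z
    using q_central[of z] by (simp add: algebra_simps)
  have yc: "y * ((q - 1) * y) = (q - 1) * (y * y)"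
    by (metis mult.assoc c_central)
  have "T * (x * y) = (T * x) * y" by (simp add: mult.assoc)
  also have "\<dots> = y * (T * y) - (q - 1) * (y * y) - y"
    unfolding Tx by (simp add: left_diff_distrib mult.assoc)
  also have "\<dots> = (x * y) * T"
    unfolding flip by (simp add: distrib_left yc mult.assoc commute)
  finally show "x * y \<in> centralizer T" by (simp add: in_centralizer_iff)
qed (rule commute)


subsection \<open>Symmetric polynomials in two commuting elements\<close>

context symmetric_pair
begin

lemma power_sum_in_centralizer: "x ^ m + y ^ m \<in> centralizer T"
proof -
  have "x ^ m + y ^ m \<in> centralizer T \<and> x ^ Suc m + y ^ Suc m \<in> centralizer T"
  proof (induction m)
    case 0
    have "(2::'a) \<in> centralizer T" by (simp add: in_centralizer_iff mult_2 mult_2_right)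
    then show ?case using sum_in_centralizer by simp
  next
    case (Suc m)
    have "y * (x * x ^ m) = x * (y * x ^ m)" by (metis mult.assoc commute)
    hence newton: "x ^ Suc (Suc m) + y ^ Suc (Suc m)
        = (x + y) * (x ^ Suc m + y ^ Suc m) - (x * y) * (x ^ m + y ^ m)"
      by (simp add: algebra_simps)
    show ?case
      unfolding newton using Suc sum_in_centralizer prod_in_centralizer
      by (simp add: centralizer_mult centralizer_diff)
  qed
  thus ?thesis by simp
qed

lemma power_commute: "x ^ i * y ^ j = y ^ j * x ^ i"
proof -
  have "y ^ j * x = x * y ^ j" using power_commuting_commutes[of y x j] commute by simp
  then show ?thesis using power_commuting_commutes[of x "y ^ j" i] by simp
qed

lemma power_mult_commuting: "(x * y) ^ i = x ^ i * y ^ i"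
proof (induction i)
  case (Suc i)
  have "y * x ^ i = x ^ i * y" using power_commute[of i 1] by simp
  moreover have "(x * y) ^ Suc i = x * (y * x ^ i) * y ^ i" using Suc by (simp add: mult.assoc)
  ultimately show ?case by (simp add: mult.assoc)
qed simp

lemma symmetric_monomial_in_centralizer: "x ^ i * y ^ j + x ^ j * y ^ i \<in> centralizer T"
proof -
  have sym: "x ^ i * y ^ (i + d) + x ^ (i + d) * y ^ i \<in> centralizer T" for i d
  proof -
    have yx: "y ^ i * x ^ d = x ^ d * y ^ i" by (rule power_commute[symmetric])
    have "(x * y) ^ i * (x ^ d + y ^ d) = x ^ (i + d) * y ^ i + x ^ i * y ^ (i + d)"
      by (simp only: power_mult_commuting power_add distrib_left mult.assoc yx)
    moreover have "(x * y) ^ i * (x ^ d + y ^ d) \<in> centralizer T"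
      by (simp add: centralizer_mult centralizer_power prod_in_centralizer power_sum_in_centralizer)
    ultimately show ?thesis by (simp add: add.commute)
  qed
  show ?thesis
  proof (cases "i \<le> j")
    case True then show ?thesis using sym[of i "j - i"] by simp
  next
    case False then show ?thesis using sym[of j "i - j"] by (simp add: add.commute)
  qed
qed

end


subsection \<open>Polynomial functions with central coefficients\<close>

inductive poly_fun :: "('k \<Rightarrow> 'a::ring_1) \<Rightarrow> ('a \<Rightarrow> 'a) \<Rightarrow> bool" for \<phi> where
  poly_fun_zero: "poly_fun \<phi> (\<lambda>z. 0)"
| poly_fun_monom: "poly_fun \<phi> (\<lambda>z. \<phi> c * z ^ k)"
| poly_fun_add: "poly_fun \<phi> f \<Longrightarrow> poly_fun \<phi> g \<Longrightarrow> poly_fun \<phi> (\<lambda>z. f z + g z)"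

lemma poly_fun_scale:
  assumes "central_hom \<phi>" "poly_fun \<phi> f"
  shows "poly_fun \<phi> (\<lambda>z. \<phi> d * f z)"
  using assms(2)
proof induction
  case (poly_fun_monom c k)
  have "(\<lambda>z. \<phi> d * (\<phi> c * z ^ k)) = (\<lambda>z. \<phi> (d * c) * z ^ k)"
    by (simp add: central_hom_mult[OF assms(1)] mult.assoc)
  then show ?case by (metis poly_fun.poly_fun_monom)
qed (simp_all add: poly_fun.intros distrib_left)

lemma poly_fun_times_var:
  assumes "central_hom \<phi>" "poly_fun \<phi> f"
  shows "poly_fun \<phi> (\<lambda>z. z * f z)"
  using assms(2)
proof induction
  case (poly_fun_monom c k)
  have "z * (\<phi> c * z ^ k) = \<phi> c * z ^ Suc k" for z
  proof -
    have "z * (\<phi> c * z ^ k) = (z * \<phi> c) * z ^ k" by (simp add: mult.assoc)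
    also have "\<dots> = \<phi> c * z ^ Suc k"
      unfolding central_hom_central[OF assms(1), of c z, symmetric] by (simp add: mult.assoc)
    finally show ?thesis .
  qed
  then show ?case using poly_fun.poly_fun_monom[of \<phi> c "Suc k"] by simp
qed (simp_all add: poly_fun.intros distrib_left)

lemma poly_fun_prod_linear_factors:
  assumes "central_hom \<phi>"
  shows "poly_fun \<phi> (\<lambda>z. prod_list (map (\<lambda>c. (z - \<phi> (g c)) * \<phi> (h c)) cs))"
proof (induction cs)
  case Nil
  show ?case using poly_fun.poly_fun_monom[of \<phi> 1 0] by (simp add: central_hom_one[OF assms])
next
  case (Cons a cs)
  let ?f = "\<lambda>z. prod_list (map (\<lambda>c. (z - \<phi> (g c)) * \<phi> (h c)) cs)"
  have "(\<lambda>z. prod_list (map (\<lambda>c. (z - \<phi> (g c)) * \<phi> (h c)) (a # cs)))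
      = (\<lambda>z. z * (\<phi> (h a) * ?f z) + \<phi> (- (g a * h a)) * ?f z)"
    by (simp add: left_diff_distrib distrib_left mult.assoc
        central_hom_uminus[OF assms] central_hom_mult[OF assms])
  moreover have "poly_fun \<phi> (\<lambda>z. z * (\<phi> (h a) * ?f z) + \<phi> (- (g a * h a)) * ?f z)"
    using Cons by (intro poly_fun.poly_fun_add poly_fun_times_var poly_fun_scale assms)
  ultimately show ?case by simp
qed

lemma poly_fun_in_centralizer:
  assumes "central_hom \<phi>" "poly_fun \<phi> f" "z \<in> centralizer T"
  shows "f z \<in> centralizer T"
  using assms(2)
proof induction
  case (poly_fun_monom c k)
  show ?case by (intro centralizer_mult centralizer_power central_hom_in_centralizer assms(1,3))
qed (simp_all add: centralizer_add)

lemma (in symmetric_pair) poly_fun_symmetrized_in_centralizer: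
  assumes cent: "central_hom \<phi>" and "poly_fun \<phi> f" "poly_fun \<phi> g"
  shows "f x * g y + g x * f y \<in> centralizer T"
  using assms(2)
proof induction
  case (poly_fun_monom c k)
  show ?case
    using assms(3)
  proof induction
    case (poly_fun_monom d j)
    have "\<phi> c * x ^ k * (\<phi> d * y ^ j) + \<phi> d * x ^ j * (\<phi> c * y ^ k)
        = \<phi> (c * d) * (x ^ k * y ^ j + x ^ j * y ^ k)"
      by (simp add: distrib_left central_hom_scaled_mult[OF cent] mult.commute[of d c])
    then show ?case
      by (simp add: centralizer_mult central_hom_in_centralizer[OF cent]
          symmetric_monomial_in_centralizer)
  next
    case (poly_fun_add g1 g2)
    have "\<phi> c * x ^ k * (g1 y + g2 y) + (g1 x + g2 x) * (\<phi> c * y ^ k)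
        = (\<phi> c * x ^ k * g1 y + g1 x * (\<phi> c * y ^ k))
          + (\<phi> c * x ^ k * g2 y + g2 x * (\<phi> c * y ^ k))"
      by (simp add: algebra_simps)
    then show ?case using poly_fun_add.IH by (simp add: centralizer_add)
  qed simp
next
  case (poly_fun_add f1 f2)
  have "(f1 x + f2 x) * g y + g x * (f1 y + f2 y)
      = (f1 x * g y + g x * f1 y) + (f2 x * g y + g x * f2 y)"
    by (simp add: algebra_simps)
  then show ?case using poly_fun_add.IH by (simp add: centralizer_add)
qed simp


subsection \<open>Swapping two consecutive entries of a standard tableau\<close>

definition node_le :: "nat \<times> nat \<times> nat \<Rightarrow> nat \<times> nat \<times> nat \<Rightarrow> bool" where
  "node_le u v \<longleftrightarrow> fst u = fst v \<and> fst (snd u) \<le> fst (snd v) \<and> snd (snd u) \<le> snd (snd v)"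

lemma std_tab_iff:
  "xs \<in> std_tab ell n \<longleftrightarrow> length xs = n \<and> distinct xs \<and> mp_diagram ell (set xs) \<and>
     (\<forall>i<n. \<forall>j<n. node_le (xs ! i) (xs ! j) \<longrightarrow> i \<le> j)"
  by (simp add: std_tab_def node_le_def)

lemma std_tab_node_le_content_diff:
  assumes xs: "xs \<in> std_tab ell n" and pn: "Suc p < n" and le: "node_le (xs ! p) (xs ! Suc p)"
  shows "\<bar>content \<kappa> (xs ! p) - content \<kappa> (xs ! Suc p)\<bar> = 1"
proof -
  have len: "length xs = n" and dist: "distinct xs" and diag: "mp_diagram ell (set xs)"
    and ord: "\<And>i j. i < n \<Longrightarrow> j < n \<Longrightarrow> node_le (xs ! i) (xs ! j) \<Longrightarrow> i \<le> j"
    using xs by (auto simp: std_tab_iff)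
  obtain l a b where P: "xs ! p = (l, a, b)" using prod_cases3 by blast
  obtain l' a' b' where Q': "xs ! Suc p = (l', a', b')" using prod_cases3 by blast
  with le P have "l' = l" "a \<le> a'" "b \<le> b'" by (auto simp: node_le_def)
  with Q' have Q: "xs ! Suc p = (l, a', b')" by simp
  have P_in: "(l, a, b) \<in> set xs" and Q_in: "(l, a', b') \<in> set xs"
    using P Q len pn by (metis Suc_lessD nth_mem)+
  have "1 \<le> a" "1 \<le> b" using diag P_in unfolding mp_diagram_def by fastforce+
  have below_Q: "(l, r', c') \<in> set xs" if "1 \<le> r'" "r' \<le> a'" "1 \<le> c'" "c' \<le> b'" for r' c'
    using diag Q_in that unfolding mp_diagram_def by fastforce
  have between: "m = (l, a', b')"
    if m: "m \<in> set xs" "m \<noteq> (l, a, b)" "node_le (l, a, b) m" "node_le m (l, a', b')" for m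
  proof -
    obtain k where k: "k < n" "xs ! k = m" using m(1) len by (auto simp: in_set_conv_nth)
    have "p \<le> k" "k \<le> Suc p" using ord[of p k] ord[of k "Suc p"] k m P Q pn by auto
    moreover have "k \<noteq> p" using k m P by auto
    ultimately have "k = Suc p" by simp
    then show ?thesis using k Q by simp
  qed
  have "xs ! p \<noteq> xs ! Suc p" using dist len pn by (simp add: nth_eq_iff_index_eq)
  then have PQ_neq: "(l, a, b) \<noteq> (l, a', b')" using P Q by simp
  show ?thesis
  proof (cases "a < a'")
    case True
    have "(l, Suc a, b) = (l, a', b')"
      by (rule between) (use below_Q[of "Suc a" b] True \<open>1 \<le> b\<close> \<open>b \<le> b'\<close> in \<open>auto simp: node_le_def\<close>)
    then show ?thesis using P Q by (auto simp: content_def)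
  next
    case False
    with \<open>a \<le> a'\<close> PQ_neq \<open>b \<le> b'\<close> have "a' = a" "b < b'" by auto
    then have "(l, a, Suc b) = (l, a', b')"
      by (intro between) (use below_Q[of a "Suc b"] \<open>1 \<le> a\<close> in \<open>auto simp: node_le_def\<close>)
    then show ?thesis using P Q by (auto simp: content_def)
  qed
qed

lemma std_tab_equal_residues_not_node_le:
  assumes "xs \<in> std_tab ell n" "Suc p < n" "e \<ge> 2"
    and "residue e \<kappa> (xs ! p) = residue e \<kappa> (xs ! Suc p)"
  shows "\<not> node_le (xs ! p) (xs ! Suc p)"
proof
  let ?d = "content \<kappa> (xs ! p) - content \<kappa> (xs ! Suc p)"
  assume "node_le (xs ! p) (xs ! Suc p)"
  then have "\<bar>?d\<bar> = 1" by (rule std_tab_node_le_content_diff[OF assms(1,2)])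
  moreover have "int e dvd ?d" using assms(4) by (simp add: residue_def mod_eq_dvd_iff)
  ultimately have "int e dvd 1" by (metis dvd_abs_iff)
  then show False using \<open>e \<ge> 2\<close> by simp
qed

definition swap_adj :: "nat \<Rightarrow> 'b list \<Rightarrow> 'b list" where
  "swap_adj p xs = xs[p := xs ! Suc p, Suc p := xs ! p]"

lemma length_swap_adj [simp]: "length (swap_adj p xs) = length xs"
  by (simp add: swap_adj_def)

lemma nth_swap_adj:
  "Suc p < length xs \<Longrightarrow> k < length xs \<Longrightarrow>
     swap_adj p xs ! k = xs ! (if k = p then Suc p else if k = Suc p then p else k)"
  by (simp add: swap_adj_def nth_list_update)

lemma swap_adj_swap_adj: "Suc p < length xs \<Longrightarrow> swap_adj p (swap_adj p xs) = xs"
  by (rule nth_equalityI) (auto simp: nth_swap_adj)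

lemma map_swap_adj: "Suc p < length xs \<Longrightarrow> map f (swap_adj p xs) = swap_adj p (map f xs)"
  by (simp add: swap_adj_def map_update)

lemma swap_adj_id: "xs ! p = xs ! Suc p \<Longrightarrow> swap_adj p xs = xs"
  unfolding swap_adj_def by (metis list_update_id)

lemma swap_adj_neq:
  assumes "distinct xs" "Suc p < length xs"
  shows "swap_adj p xs \<noteq> xs"
proof
  assume "swap_adj p xs = xs"
  then have "xs ! Suc p = xs ! p" using nth_swap_adj[of p xs p] assms(2) by simp
  then show False using assms by (simp add: nth_eq_iff_index_eq)
qed

lemma swap_adj_std_tab:
  assumes xs: "xs \<in> std_tab ell n" and pn: "Suc p < n"
    and incomparable: "\<not> node_le (xs ! p) (xs ! Suc p)"
  shows "swap_adj p xs \<in> std_tab ell n"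
proof -
  define \<pi> where "\<pi> k = (if k = p then Suc p else if k = Suc p then p else k)" for k
  have len: "length xs = n" and ord: "\<And>i j. i < n \<Longrightarrow> j < n \<Longrightarrow> node_le (xs ! i) (xs ! j) \<Longrightarrow> i \<le> j"
    using xs by (auto simp: std_tab_iff)
  have nth: "swap_adj p xs ! k = xs ! \<pi> k" if "k < n" for k
    using nth_swap_adj[of p xs k] that pn len by (simp add: \<pi>_def)
  have "a \<le> b" if ab: "a < n" "b < n" "node_le (swap_adj p xs ! a) (swap_adj p xs ! b)" for a b
  proof -
    have "\<pi> a \<le> \<pi> b" using ord[of "\<pi> a" "\<pi> b"] ab pn by (simp add: nth \<pi>_def)
    moreover have "\<not> (a = Suc p \<and> b = p)" using incomparable ab by (auto simp: nth \<pi>_def)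
    ultimately show "a \<le> b" by (auto simp: \<pi>_def split: if_splits)
  qed
  moreover have "set (swap_adj p xs) = set xs" "distinct (swap_adj p xs) = distinct xs"
    using len pn by (simp_all add: swap_adj_def)
  ultimately show ?thesis using xs by (simp add: std_tab_iff)
qed

lemma swap_adj_std_res:
  assumes xs: "xs \<in> std_res ell n \<kappa> e i" and pn: "Suc p < n" and "e \<ge> 2"
    and equal_residues: "i ! p = i ! Suc p"
  shows "swap_adj p xs \<in> std_res ell n \<kappa> e i"
proof -
  have tab: "xs \<in> std_tab ell n" and res: "map (residue e \<kappa>) xs = i"
    using xs by (auto simp: std_res_def)
  have "residue e \<kappa> (xs ! p) = residue e \<kappa> (xs ! Suc p)"
    using res equal_residues pn tab by (metis Suc_lessD nth_map std_tab_iff)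
  then have "swap_adj p xs \<in> std_tab ell n"
    using swap_adj_std_tab std_tab_equal_residues_not_node_le tab pn \<open>e \<ge> 2\<close> by blast
  moreover have "map (residue e \<kappa>) (swap_adj p xs) = i"
    using pn tab by (simp add: std_tab_iff map_swap_adj res swap_adj_id equal_residues)
  ultimately show ?thesis by (simp add: std_res_def)
qed


definition F_factor :: "('k::field \<Rightarrow> 'a::ring_1) \<Rightarrow> 'k \<Rightarrow> (nat \<Rightarrow> int) \<Rightarrow> nat \<Rightarrow> nat \<Rightarrow> int \<Rightarrow> 'a \<Rightarrow> 'a"
  where "F_factor \<phi> t \<kappa> ell n a z =
    prod_list (map (\<lambda>c. (z - \<phi> (qint t c)) * \<phi> (inverse (qint t a - qint t c)))
      (sorted_list_of_set {c \<in> conts ell n \<kappa>. qint t a \<noteq> qint t c}))"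

definition F_prod :: "('k::field \<Rightarrow> 'a::ring_1) \<Rightarrow> 'k \<Rightarrow> (nat \<Rightarrow> int) \<Rightarrow> nat \<Rightarrow> nat \<Rightarrow> (nat \<Rightarrow> 'a)
    \<Rightarrow> (nat \<times> nat \<times> nat) list \<Rightarrow> nat list \<Rightarrow> 'a"
  where "F_prod \<phi> t \<kappa> ell n L xs ks =
    prod_list (map (\<lambda>k. F_factor \<phi> t \<kappa> ell n (content \<kappa> (xs ! (k - 1))) (L k)) ks)"

lemma F_tab_eq_F_prod: "F_tab \<phi> t \<kappa> ell n L xs = F_prod \<phi> t \<kappa> ell n L xs [1..<n+1]"
  by (simp add: F_tab_def F_prod_def F_factor_def)

lemma poly_fun_F_factor: "central_hom \<phi> \<Longrightarrow> poly_fun \<phi> (F_factor \<phi> t \<kappa> ell n a)"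
  unfolding F_factor_def[abs_def] by (rule poly_fun_prod_linear_factors)

lemma F_prod_in_centralizer:
  assumes "central_hom \<phi>" and "\<And>k. k \<in> set ks \<Longrightarrow> L k \<in> centralizer T"
  shows "F_prod \<phi> t \<kappa> ell n L xs ks \<in> centralizer T"
proof -
  have "F_factor \<phi> t \<kappa> ell n a (L k) \<in> centralizer T" if "k \<in> set ks" for a k
    by (rule poly_fun_in_centralizer[OF assms(1) poly_fun_F_factor[OF assms(1)] assms(2)[OF that]])
  then show ?thesis unfolding F_prod_def by (auto intro!: centralizer_prod_list)
qed

lemma F_prod_swap_adj:
  assumes "Suc p < length xs" and "\<And>k. k \<in> set ks \<Longrightarrow> 1 \<le> k \<and> k \<le> length xs \<and> k \<noteq> Suc p \<and> k \<noteq> Suc (Suc p)"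
  shows "F_prod \<phi> t \<kappa> ell n L (swap_adj p xs) ks = F_prod \<phi> t \<kappa> ell n L xs ks"
  unfolding F_prod_def
proof (rule arg_cong[where f = prod_list], rule map_cong[OF refl])
  fix k assume "k \<in> set ks"
  then have "k - 1 < length xs" "k - 1 \<noteq> p" "k - 1 \<noteq> Suc p" using assms(2) by fastforce+
  then show "F_factor \<phi> t \<kappa> ell n (content \<kappa> (swap_adj p xs ! (k - 1))) (L k)
      = F_factor \<phi> t \<kappa> ell n (content \<kappa> (xs ! (k - 1))) (L k)"
    using nth_swap_adj[OF assms(1)] by simp
qed

lemma upt_split_adjacent:
  assumes "Suc p < n"
  shows "[1..<n+1] = [1..<Suc p] @ Suc p # Suc (Suc p) # [Suc (Suc (Suc p))..<n+1]"
proof -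
  have "[1..<n+1] = [1..<Suc p] @ [Suc p..<Suc p + (n - p)]"
    using upt_add_eq_append[of 1 "Suc p" "n - p"] assms by simp
  also have "Suc p + (n - p) = n + 1" using assms by simp
  also have "[Suc p..<n+1] = Suc p # Suc (Suc p) # [Suc (Suc (Suc p))..<n+1]"
    using assms by (simp add: upt_conv_Cons)
  finally show ?thesis .
qed

lemma F_tab_add_F_tab_swap_adj:
  fixes \<phi> :: "'k::field \<Rightarrow> 'a::ring_1" and t \<kappa> ell L
  assumes len: "length xs = n" and pn: "Suc p < n"
  defines "P \<equiv> F_factor \<phi> t \<kappa> ell n" and "a \<equiv> content \<kappa> (xs ! p)" and "b \<equiv> content \<kappa> (xs ! Suc p)"
    and "A \<equiv> F_prod \<phi> t \<kappa> ell n L xs [1..<Suc p]"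
    and "B \<equiv> F_prod \<phi> t \<kappa> ell n L xs [Suc (Suc (Suc p))..<n+1]"
  shows "F_tab \<phi> t \<kappa> ell n L xs + F_tab \<phi> t \<kappa> ell n L (swap_adj p xs)
    = A * (P a (L (Suc p)) * P b (L (Suc (Suc p))) + P b (L (Suc p)) * P a (L (Suc (Suc p)))) * B"
proof -
  have split: "F_tab \<phi> t \<kappa> ell n L ys
      = F_prod \<phi> t \<kappa> ell n L ys [1..<Suc p] * (P (content \<kappa> (ys ! p)) (L (Suc p))
        * (P (content \<kappa> (ys ! Suc p)) (L (Suc (Suc p)))
        * F_prod \<phi> t \<kappa> ell n L ys [Suc (Suc (Suc p))..<n+1]))" for ys
    unfolding F_tab_eq_F_prod upt_split_adjacent[OF pn] P_def by (simp add: F_prod_def)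
  have "F_prod \<phi> t \<kappa> ell n L (swap_adj p xs) [1..<Suc p] = A"
    and "F_prod \<phi> t \<kappa> ell n L (swap_adj p xs) [Suc (Suc (Suc p))..<n+1] = B"
    unfolding A_def B_def using len pn by (auto intro!: F_prod_swap_adj)
  moreover have "swap_adj p xs ! p = xs ! Suc p" "swap_adj p xs ! Suc p = xs ! p"
    using nth_swap_adj[of p xs] len pn by simp_all
  ultimately show ?thesis
    unfolding split a_def b_def A_def B_def by (simp add: distrib_left distrib_right mult.assoc)
qed

lemma F_tab_swap_adj_in_centralizer:
  fixes \<phi> :: "'k::field \<Rightarrow> 'a::ring_1"
  assumes cent: "central_hom \<phi>" and len: "length xs = n" and pn: "Suc p < n"
    and others: "\<And>k. k \<in> {1..n} \<Longrightarrow> k \<noteq> Suc p \<Longrightarrow> k \<noteq> Suc (Suc p) \<Longrightarrow> L k \<in> centralizer T"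
    and sym: "symmetric_pair T (L (Suc p)) (L (Suc (Suc p)))"
  shows "F_tab \<phi> t \<kappa> ell n L xs + F_tab \<phi> t \<kappa> ell n L (swap_adj p xs) \<in> centralizer T"
  unfolding F_tab_add_F_tab_swap_adj[OF len pn] using pn
  by (intro centralizer_mult F_prod_in_centralizer cent others
      symmetric_pair.poly_fun_symmetrized_in_centralizer[OF sym cent] poly_fun_F_factor) auto

lemma hecke_rel_symmetric_pair:
  assumes cent: "central_hom \<phi>" and rel: "hecke_rel \<phi> t \<kappa> ell n L T" and "t \<noteq> 0"
    and "1 \<le> r" "r < n"
  shows "symmetric_pair (T r) (L r) (L (Suc r))"
proof (rule hecke_symmetric_pair)
  show "\<phi> t * z = z * \<phi> t" for z by (rule central_hom_central[OF cent])
  show "\<phi> t * \<phi> (inverse t) = 1"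
    using \<open>t \<noteq> 0\<close> by (simp add: central_hom_mult[OF cent, symmetric] central_hom_one[OF cent])
  have "(T r + 1) * (T r - \<phi> t) = 0" using rel assms(4,5) by (simp add: hecke_rel_def)
  then show "T r * T r = (\<phi> t - 1) * T r + \<phi> t"
    using central_hom_central[OF cent, of t "T r"] by (simp add: algebra_simps)
  show "L (Suc r) * (T r - \<phi> t + 1) = T r * L r + 1"
    and "L r * L (Suc r) = L (Suc r) * L r"
    using rel assms(4,5) by (simp_all add: hecke_rel_def)
qed

theorem lemma4p7:
  fixes \<phi> :: "'k::field \<Rightarrow> 'a::ring_1" and t :: 'k and \<kappa> :: "nat \<Rightarrow> int"
    and e ell n r :: nat and i :: "int list" and L T :: "nat \<Rightarrow> 'a"
  assumes "e \<ge> 2" and "ell \<ge> 1"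
    and "\<forall>l. 1 \<le> l \<and> l < ell \<longrightarrow> \<kappa> l - \<kappa> (l+1) \<ge> int n"
    and "t \<noteq> 0" and "separating t \<kappa> ell n"
    and "central_hom \<phi>" and "hecke_rel \<phi> t \<kappa> ell n L T"
    and "length i = n" and "set i \<subseteq> {0..<int e}"
    and "1 \<le> r" and "r < n" and "i ! (r-1) = i ! r"
  shows "T r * f_idem \<phi> t \<kappa> e ell n L i = f_idem \<phi> t \<kappa> e ell n L i * T r"
proof -
  obtain p where r: "r = Suc p" using \<open>1 \<le> r\<close> by (cases r) auto
  have pn: "Suc p < n" and equal_residues: "i ! p = i ! Suc p" using assms(11,12) r by simp_all
  have sym: "symmetric_pair (T r) (L (Suc p)) (L (Suc (Suc p)))"
    using hecke_rel_symmetric_pair[OF assms(6,7,4,10,11)] r by simp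
  have others: "L k \<in> centralizer (T r)" if "k \<in> {1..n}" "k \<noteq> Suc p" "k \<noteq> Suc (Suc p)" for k
    using assms(7,11) that r by (auto simp: hecke_rel_def in_centralizer_iff)
  let ?F = "F_tab \<phi> t \<kappa> ell n L"
  have "(\<Sum>xs\<in>std_res ell n \<kappa> e i. T r * ?F xs - ?F xs * T r) = 0"
  proof (rule sum_involution_eq_0)
    fix xs assume xs: "xs \<in> std_res ell n \<kappa> e i"
    then have len: "length xs = n" and "distinct xs" by (auto simp: std_res_def std_tab_iff)
    show "swap_adj p xs \<in> std_res ell n \<kappa> e i"
      by (rule swap_adj_std_res[OF xs pn \<open>e \<ge> 2\<close> equal_residues])
    show "swap_adj p (swap_adj p xs) = xs" by (rule swap_adj_swap_adj) (simp add: len pn)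
    show "swap_adj p xs \<noteq> xs" by (rule swap_adj_neq) (simp_all add: \<open>distinct xs\<close> len pn)
    show "T r * ?F (swap_adj p xs) - ?F (swap_adj p xs) * T r + (T r * ?F xs - ?F xs * T r) = 0"
      using F_tab_swap_adj_in_centralizer[OF assms(6) len pn others sym]
      by (simp add: in_centralizer_iff algebra_simps)
  qed
  then show ?thesis by (simp add: f_idem_def sum_distrib_left sum_distrib_right sum_subtractf)
qed

end
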